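(* If $w\in S_n$ avoids the pattern $231$, then every permutation hop-equivalent to $w$ avoids $231$; that is, $P_w\subseteq S_n(231)$. Equivalently, if $w$ contains $231$ then $H_s(w)$ contains $231$ for every $s\in F(w)$.
   Context: A permutation $w\in S_n$ contains $231$ if there are indices $i<j<k$ with $w(k)<w(i)<w(j)$, and avoids $231$ otherwise; $S_n(231)$ is the set of $231$-avoiding permutations. For $w=w(1)\cdots w(n)$ set $w(0)=w(n+1)=\infty$. A letter $w(i)$, $1\le i\le n$, is free if $w(i-1)<w(i)<w(i+1)$ (upslope) or $w(i-1)>w(i)>w(i+1)$ (downslope); $F(w)$ is the set of free letters. For $j=w(i)\in F(w)$ define $H_j(w)$: if $j$ is on a downslope, take the smallest $k>i$ with $w(k)<j<w(k+1)$ and let $H_j(w)=w(1)\cdots w(i-1)w(i+1)\cdots w(k)\,j\,w(k+1)\cdots w(n)$; if $j$ is on an upslope, take the largest $k<i$ with $w(k-1)>j>w(k)$ and let $H_j(w)=w(1)\cdots w(k-1)\,j\,w(k)\cdots w(i-1)w(i+1)\cdots w(n)$. Hop-equivalence is the equivalence relation generated by $w\sim H_j(w)$; $P_w$ is the class of $w$. *)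

theory Defs
  imports Main "HOL-Library.Extended_Nat"
begin

text \<open>A permutation w in S_n is represented as the list [w(1),...,w(n)].
  Positions are 1-based in the paper; list indices are 0-based, so w(i) = w ! (i-1).\<close>

definition is_perm :: "nat \<Rightarrow> nat list \<Rightarrow> bool" where
  "is_perm n w \<longleftrightarrow> length w = n \<and> distinct w \<and> set w = {1..n}"

definition contains231 :: "nat list \<Rightarrow> bool" where
  "contains231 w \<longleftrightarrow> (\<exists>i j k. i < j \<and> j < k \<and> k < length w \<and>
       w ! k < w ! i \<and> w ! i < w ! j)"

definition avoids231 :: "nat list \<Rightarrow> bool" where
  "avoids231 w \<longleftrightarrow> \<not> contains231 w"

definition S231 :: "nat \<Rightarrow> nat list set" where
  "S231 n = {w. is_perm n w \<and> avoids231 w}"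

definition wx :: "nat list \<Rightarrow> nat \<Rightarrow> enat" where
  "wx w i = (if 1 \<le> i \<and> i \<le> length w then enat (w ! (i - 1)) else \<infinity>)"

definition upslope :: "nat list \<Rightarrow> nat \<Rightarrow> bool" where
  "upslope w i \<longleftrightarrow> 1 \<le> i \<and> i \<le> length w \<and> wx w (i - 1) < wx w i \<and> wx w i < wx w (i + 1)"

definition downslope :: "nat list \<Rightarrow> nat \<Rightarrow> bool" where
  "downslope w i \<longleftrightarrow> 1 \<le> i \<and> i \<le> length w \<and> wx w (i - 1) > wx w i \<and> wx w i > wx w (i + 1)"

definition free_letters :: "nat list \<Rightarrow> nat set" where
  "free_letters w = {w ! (i - 1) | i. upslope w i \<or> downslope w i}"

definition pos :: "nat list \<Rightarrow> nat \<Rightarrow> nat" where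
  "pos w j = (LEAST i. 1 \<le> i \<and> i \<le> length w \<and> w ! (i - 1) = j)"

definition hop :: "nat list \<Rightarrow> nat \<Rightarrow> nat list" where
  "hop w j = (let i = pos w j in
     if downslope w i then
       (let k = (LEAST k. i < k \<and> wx w k < enat j \<and> enat j < wx w (k + 1)) in
         take (i - 1) w @ take (k - i) (drop i w) @ [j] @ drop k w)
     else
       (let k = (GREATEST k. k < i \<and> wx w (k - 1) > enat j \<and> enat j > wx w k) in
         take (k - 1) w @ [j] @ take (i - k) (drop (k - 1) w) @ drop i w))"

definition hop_step :: "nat list \<Rightarrow> nat list \<Rightarrow> bool" where
  "hop_step w v \<longleftrightarrow> (\<exists>j \<in> free_letters w. v = hop w j)"

definition hop_equiv :: "nat list \<Rightarrow> nat list \<Rightarrow> bool" where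
  "hop_equiv = (\<lambda>x y. hop_step x y \<or> hop_step y x)\<^sup>*\<^sup>*"

definition hop_class :: "nat list \<Rightarrow> nat list set" where
  "hop_class w = {v. hop_equiv w v}"

end

theory Submission
  imports Defs "HOL-Library.Multiset"
begin

(* A hop moves a free letter j across a block of letters that are all smaller
   than j, and the letters bordering the moved j before and after the hop (if any) are
   larger than j.  Such a "slide" neither creates nor destroys a 231 pattern: the only
   patterns whose relative order changes are those using j as the "3" together with a
   letter of the block as the "2" (resp. the "1"), and these can be rerouted through the
   large neighbour of j.  Hence every hop step, in either direction, maps 231-avoiding
   permutations to 231-avoiding permutations, and the theorem follows by induction along
   the reflexive transitive closure defining hop-equivalence. *)

subsection \<open>Patterns described by letters\<close>

fun index_of :: "'a list \<Rightarrow> 'a \<Rightarrow> nat" where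
  "index_of [] x = 0"
| "index_of (y # ys) x = (if x = y then 0 else Suc (index_of ys x))"

lemma index_of_append:
  "index_of (xs @ ys) x = (if x \<in> set xs then index_of xs x else length xs + index_of ys x)"
  by (induction xs) auto

lemma index_of_less: "x \<in> set xs \<Longrightarrow> index_of xs x < length xs"
  by (induction xs) auto

lemma nth_index_of: "x \<in> set xs \<Longrightarrow> xs ! index_of xs x = x"
  by (induction xs) auto

lemma index_of_nth: "distinct xs \<Longrightarrow> i < length xs \<Longrightarrow> index_of xs (xs ! i) = i"
proof (induction xs arbitrary: i)
  case (Cons a xs)
  then show ?case by (cases i) (auto simp: nth_mem)
qed simp

lemma index_of_hd: "x \<in> set R \<Longrightarrow> x \<noteq> hd R \<Longrightarrow> 0 < index_of R x"
  by (cases R) auto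

lemma index_of_hd_eq: "R \<noteq> [] \<Longrightarrow> index_of R (hd R) = 0"
  by (cases R) auto

lemma index_of_last:
  assumes "distinct L" "x \<in> set L" "x \<noteq> last L"
  shows "index_of L x < index_of L (last L)"
proof -
  have ne: "L \<noteq> []" using assms by auto
  have "index_of L (last L) = length L - 1"
    using index_of_nth[OF assms(1), of "length L - 1"] ne by (simp add: last_conv_nth)
  moreover have "index_of L x < length L" using index_of_less[OF assms(2)] .
  moreover have "index_of L x \<noteq> length L - 1"
    using nth_index_of[OF assms(2)] assms(3) ne by (metis last_conv_nth)
  ultimately show ?thesis by linarith
qed

definition pattern231 :: "nat list \<Rightarrow> nat \<Rightarrow> nat \<Rightarrow> nat \<Rightarrow> bool" where
  "pattern231 w x y z \<longleftrightarrow> x \<in> set w \<and> y \<in> set w \<and> z \<in> set w \<and> z < x \<and> x < y \<and>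
     index_of w x < index_of w y \<and> index_of w y < index_of w z"

text \<open>For lists without repetitions, containing 231 means having a 231 pattern of letters;
  this lets us argue about letters, which a slide leaves unchanged, instead of positions.\<close>
lemma contains231_iff_pattern:
  assumes "distinct w"
  shows "contains231 w \<longleftrightarrow> (\<exists>x y z. pattern231 w x y z)"
proof
  assume "contains231 w"
  then obtain i j k where h: "i < j" "j < k" "k < length w" "w ! k < w ! i" "w ! i < w ! j"
    unfolding contains231_def by blast
  then have "pattern231 w (w ! i) (w ! j) (w ! k)"
    using assms by (simp add: pattern231_def index_of_nth nth_mem)
  then show "\<exists>x y z. pattern231 w x y z" by blast
next
  assume "\<exists>x y z. pattern231 w x y z"
  then obtain x y z where "pattern231 w x y z" by blast
  then show "contains231 w" unfolding contains231_def pattern231_def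
    by (intro exI[of _ "index_of w x"] exI[of _ "index_of w y"] exI[of _ "index_of w z"])
       (simp add: index_of_less nth_index_of)
qed

subsection \<open>Sliding a letter past smaller letters\<close>

definition slide :: "nat \<Rightarrow> nat list \<Rightarrow> nat list \<Rightarrow> bool" where
  "slide j u v \<longleftrightarrow> (\<exists>L B R. u = L @ [j] @ B @ R \<and> v = L @ B @ [j] @ R \<and>
     (\<forall>b \<in> set B. b < j) \<and> (L \<noteq> [] \<longrightarrow> j < last L) \<and> (R \<noteq> [] \<longrightarrow> j < hd R))"

text \<open>Moving j to the right can only destroy patterns x j z with z in B; then
  x, last L, z is still a pattern, as x < j < last L.\<close>
lemma slide_right_keeps_pattern:
  assumes d: "distinct (L @ [j] @ B @ R)" and B: "\<forall>b \<in> set B. b < j"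
    and L: "L \<noteq> [] \<longrightarrow> j < last L" and p: "pattern231 (L @ [j] @ B @ R) x y z"
  shows "\<exists>x y z. pattern231 (L @ B @ [j] @ R) x y z"
proof (cases "y = j \<and> z \<in> set B")
  case True
  have jLB: "j \<notin> set L" "j \<notin> set B" using d by auto
  have xL: "x \<in> set L" using p True jLB index_of_less[of x L]
    by (auto simp: pattern231_def index_of_append split: if_splits)
  then have ne: "L \<noteq> []" by auto
  have xlast: "x \<noteq> last L" using True p L ne by (auto simp: pattern231_def)
  have "z \<notin> set L" using d True by auto
  then have "pattern231 (L @ B @ [j] @ R) x (last L) z"
    using True p L ne xL xlast index_of_last[of L x] d index_of_less[of "last L" L]
    by (auto simp: pattern231_def index_of_append)
  then show ?thesis by blast
next
  case False
  then have "pattern231 (L @ B @ [j] @ R) x y z"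
    using p d B index_of_less[of x L] index_of_less[of y L] index_of_less[of z L]
      index_of_less[of x B] index_of_less[of y B] index_of_less[of z B]
    by (auto simp: pattern231_def index_of_append split: if_splits)
  then show ?thesis by blast
qed

text \<open>Symmetrically, moving j back to the left can only destroy patterns x j z with x in B;
  then x, hd R, z is still a pattern, as x < j < hd R.\<close>
lemma slide_left_keeps_pattern:
  assumes d: "distinct (L @ [j] @ B @ R)" and B: "\<forall>b \<in> set B. b < j"
    and R: "R \<noteq> [] \<longrightarrow> j < hd R" and p: "pattern231 (L @ B @ [j] @ R) x y z"
  shows "\<exists>x y z. pattern231 (L @ [j] @ B @ R) x y z"
proof (cases "y = j \<and> x \<in> set B")
  case True
  have jLBR: "j \<notin> set L" "j \<notin> set B" "j \<notin> set R" using d by auto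
  have zR: "z \<in> set R" using p True jLBR d index_of_less[of z L] index_of_less[of z B]
    by (auto simp: pattern231_def index_of_append split: if_splits)
  then have ne: "R \<noteq> []" by auto
  have zhd: "z \<noteq> hd R" using True p R ne B by (auto simp: pattern231_def)
  have "hd R \<in> set R" using ne by simp
  then have "hd R \<notin> set L" "hd R \<notin> set B" "hd R \<noteq> j" "x \<notin> set L" "x \<notin> set R"
    using d True by auto
  then have "pattern231 (L @ [j] @ B @ R) x (hd R) z"
    using True p R ne zR jLBR d index_of_hd[OF zR zhd] index_of_hd_eq[OF ne] index_of_less[of x B]
    by (auto simp: pattern231_def index_of_append)
  then show ?thesis by blast
next
  case False
  then have "pattern231 (L @ [j] @ B @ R) x y z"
    using p d B index_of_less[of x L] index_of_less[of y L] index_of_less[of z L]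
      index_of_less[of x B] index_of_less[of y B] index_of_less[of z B]
    by (auto simp: pattern231_def index_of_append split: if_splits)
  then show ?thesis by blast
qed

lemma slide_mset: "slide j u v \<Longrightarrow> mset v = mset u"
  unfolding slide_def by auto

lemma slide_preserves_231:
  assumes "slide j u v" "distinct u"
  shows "contains231 v \<longleftrightarrow> contains231 u"
proof -
  obtain L B R where u: "u = L @ [j] @ B @ R" and v: "v = L @ B @ [j] @ R"
    and B: "\<forall>b \<in> set B. b < j" and L: "L \<noteq> [] \<longrightarrow> j < last L" and R: "R \<noteq> [] \<longrightarrow> j < hd R"
    using assms(1) unfolding slide_def by blast
  have du: "distinct (L @ [j] @ B @ R)" and dv: "distinct (L @ B @ [j] @ R)"
    using assms(2) u by auto
  show ?thesis
    unfolding u v contains231_iff_pattern[OF du] contains231_iff_pattern[OF dv]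
    using slide_right_keeps_pattern[OF du B L] slide_left_keeps_pattern[OF du B R] by blast
qed

subsection \<open>Crossing a level\<close>

text \<open>The target of a downslope hop is the first place after position i where the sequence
  of letters crosses the level c upwards.\<close>
lemma first_up_crossing:
  fixes f :: "nat \<Rightarrow> 'a::linorder"
  assumes start: "f (Suc i) < c" and above: "i < N" "c < f N" and avoid: "\<forall>m>i. f m \<noteq> c"
  defines "k \<equiv> LEAST k. i < k \<and> f k < c \<and> c < f (k + 1)"
  shows "i < k \<and> f k < c \<and> c < f (k + 1) \<and> (\<forall>m. i < m \<longrightarrow> m \<le> k \<longrightarrow> f m < c)"
proof -
  define m1 where "m1 = (LEAST m. i < m \<and> c < f m)"
  have m1: "i < m1" "c < f m1" using LeastI[of "\<lambda>m. i < m \<and> c < f m" N] above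
    unfolding m1_def by auto
  have below: "f m < c" if "i < m" "m < m1" for m
    using not_less_Least[of m "\<lambda>m. i < m \<and> c < f m"] that avoid
    unfolding m1_def by (metis not_less_iff_gr_or_eq)
  have "m1 \<noteq> Suc i" using m1 start by auto
  then have Si: "Suc i < m1" using m1 by simp
  have "k = m1 - 1" unfolding k_def
  proof (rule Least_equality)
    show "i < m1 - 1 \<and> f (m1 - 1) < c \<and> c < f (m1 - 1 + 1)" using Si m1 below by simp
    show "m1 - 1 \<le> y" if y: "i < y \<and> f y < c \<and> c < f (y + 1)" for y
    proof (rule ccontr)
      assume "\<not> m1 - 1 \<le> y"
      then have "f (y + 1) < c" using y by (intro below) auto
      then show False using y by auto
    qed
  qed
  then show ?thesis using Si m1 below by auto
qed

text \<open>Dually, the target of an upslope hop is the last place before position i where the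
  sequence crosses the level c downwards, and the sequence stays below c from there to i-1.\<close>
lemma last_down_crossing:
  fixes f :: "nat \<Rightarrow> 'a::linorder"
  assumes start: "f (i - 1) < c" and i: "1 \<le> i" and above: "c < f 0" and avoid: "\<forall>m<i. f m \<noteq> c"
  defines "k \<equiv> GREATEST k. k < i \<and> c < f (k - 1) \<and> f k < c"
  shows "1 \<le> k \<and> k < i \<and> c < f (k - 1) \<and> f k < c \<and> (\<forall>m. k \<le> m \<longrightarrow> m < i \<longrightarrow> f m < c)"
proof -
  define m0 where "m0 = (GREATEST m. m < i \<and> c < f m)"
  have m0: "m0 < i" "c < f m0"
  proof -
    have "\<exists>m. m < i \<and> c < f m" using above i by (intro exI[of _ 0]) auto
    then show "m0 < i" "c < f m0"
      using GreatestI_ex_nat[of "\<lambda>m. m < i \<and> c < f m" i] unfolding m0_def by auto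
  qed
  have below: "f m < c" if "m0 < m" "m < i" for m
    using Greatest_le_nat[of "\<lambda>m. m < i \<and> c < f m" m i] that avoid
    unfolding m0_def by (metis not_less not_less_iff_gr_or_eq)
  have "m0 \<noteq> i - 1" using m0 start by auto
  then have Si: "m0 + 1 < i" using m0 by simp
  have "k = m0 + 1" unfolding k_def
  proof (rule Greatest_equality)
    show "m0 + 1 < i \<and> c < f (m0 + 1 - 1) \<and> f (m0 + 1) < c" using Si m0 below by simp
    show "y \<le> m0 + 1" if "y < i \<and> c < f (y - 1) \<and> f y < c" for y
    proof (cases y)
      case 0
      then show ?thesis using that above by auto
    next
      case (Suc y')
      then show ?thesis using that below[of y'] not_less_iff_gr_or_eq by fastforce
    qed
  qed
  then show ?thesis using Si m0 below by auto
qed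

subsection \<open>Hops are slides\<close>

lemma wx_inside: "1 \<le> m \<Longrightarrow> m \<le> length w \<Longrightarrow> wx w m = enat (w ! (m - 1))"
  by (simp add: wx_def)

lemma wx_outside: "length w < m \<Longrightarrow> wx w m = \<infinity>"
  by (simp add: wx_def)

lemma wx_0: "wx w 0 = \<infinity>"
  by (simp add: wx_def)

lemma wx_eq_imp_eq:
  assumes "distinct w" "1 \<le> i" "i \<le> length w" "wx w m = wx w i" "wx w i \<noteq> \<infinity>"
  shows "m = i"
proof -
  have m: "1 \<le> m" "m \<le> length w"
    using assms(4,5) by (auto simp: wx_def split: if_splits)
  then have "w ! (m - 1) = w ! (i - 1)" using assms(2-4) by (simp add: wx_inside)
  then have "m - 1 = i - 1" using nth_eq_iff_index_eq[OF assms(1)] m assms(2,3) by simp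
  then show "m = i" using m assms(2) by simp
qed

lemma free_letter_in_set: "j \<in> free_letters w \<Longrightarrow> j \<in> set w"
  by (auto simp: free_letters_def upslope_def downslope_def)

lemma pos_in_set:
  assumes "j \<in> set w"
  shows "1 \<le> pos w j \<and> pos w j \<le> length w \<and> w ! (pos w j - 1) = j"
proof -
  obtain t where "t < length w" "w ! t = j" using assms by (auto simp: in_set_conv_nth)
  then have "\<exists>i. 1 \<le> i \<and> i \<le> length w \<and> w ! (i - 1) = j" by (intro exI[of _ "Suc t"]) simp
  then show ?thesis unfolding pos_def by (rule LeastI_ex)
qed

lemma pos_free_letter:
  assumes d: "distinct w" and f: "j \<in> free_letters w"
  shows "1 \<le> pos w j \<and> pos w j \<le> length w \<and> wx w (pos w j) = enat j \<and>
    (upslope w (pos w j) \<or> downslope w (pos w j))"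
proof -
  obtain i0 where i0: "j = w ! (i0 - 1)" "upslope w i0 \<or> downslope w i0"
    using f unfolding free_letters_def by blast
  have r: "1 \<le> i0" "i0 \<le> length w" using i0(2) by (auto simp: upslope_def downslope_def)
  have p: "1 \<le> pos w j" "pos w j \<le> length w" "wx w (pos w j) = enat j"
    using pos_in_set[OF free_letter_in_set[OF f]] by (auto simp: wx_inside)
  have "wx w i0 = enat j" using r i0(1) by (simp add: wx_inside)
  then have "i0 = pos w j" using wx_eq_imp_eq[OF d p(1,2), of i0] p(3) by simp
  then show ?thesis using p i0 by simp
qed

lemma split_at_position:
  "1 \<le> i \<Longrightarrow> i \<le> length w \<Longrightarrow> w = take (i - 1) w @ [w ! (i - 1)] @ drop i w"
  using id_take_nth_drop[of "i - 1" w] by simp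

lemma letter_of_segment:
  assumes "a + l \<le> length w" "x \<in> set (take l (drop a w))"
  shows "\<exists>m. a < m \<and> m \<le> a + l \<and> wx w m = enat x"
proof -
  obtain t where t: "t < l" "x = w ! (a + t)" using assms by (auto simp: in_set_conv_nth)
  then show ?thesis using assms(1) by (intro exI[of _ "a + t + 1"]) (simp add: wx_inside)
qed

lemma last_take_wx:
  assumes "1 \<le> a" "a \<le> length w"
  shows "wx w a = enat (last (take a w))"
proof -
  have "take a w \<noteq> []" using assms by auto
  then show ?thesis using assms by (simp add: wx_inside last_conv_nth min_absorb2)
qed

lemma hd_drop_wx: "a < length w \<Longrightarrow> wx w (Suc a) = enat (hd (drop a w))"
  by (simp add: wx_inside hd_drop_conv_nth)

lemma hop_downslope_is_slide:
  assumes d: "distinct w" and f: "j \<in> free_letters w" and down: "downslope w (pos w j)"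
  shows "slide j w (hop w j)"
proof -
  define i where "i = pos w j"
  define k where "k = (LEAST k. i < k \<and> wx w k < enat j \<and> enat j < wx w (k + 1))"
  have i: "1 \<le> i" "i \<le> length w" and wi: "wx w i = enat j"
    using pos_free_letter[OF d f] unfolding i_def by auto
  have avoid: "\<forall>m>i. wx w m \<noteq> enat j" using wx_eq_imp_eq[OF d i] wi by force
  have start: "wx w (Suc i) < enat j" using down wi unfolding i_def downslope_def by simp
  have cross: "i < k" "wx w k < enat j" "enat j < wx w (k + 1)"
    and below: "\<forall>m. i < m \<longrightarrow> m \<le> k \<longrightarrow> wx w m < enat j"
    using first_up_crossing[of "wx w" i "enat j" "length w + 1", OF start _ _ avoid] i
    unfolding k_def by (auto simp: wx_outside)
  have k: "k \<le> length w" using cross(2) wx_outside[of w k] by (cases "length w < k") auto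
  have hop: "hop w j = take (i - 1) w @ take (k - i) (drop i w) @ [j] @ drop k w"
    using down unfolding hop_def i_def[symmetric] k_def by (simp add: Let_def)
  have "drop i w = take (k - i) (drop i w) @ drop k w"
    using cross(1) by (metis append_take_drop_id drop_drop le_add_diff_inverse2 less_imp_le)
  then have w: "w = take (i - 1) w @ [j] @ take (k - i) (drop i w) @ drop k w"
    using split_at_position[OF i] i wi by (simp add: wx_inside)
  have B: "\<forall>b \<in> set (take (k - i) (drop i w)). b < j"
    using letter_of_segment[of i "k - i" w] k cross(1) below by fastforce
  have L: "j < last (take (i - 1) w)" if "take (i - 1) w \<noteq> []"
  proof -
    have "wx w i < wx w (i - 1)" using down unfolding i_def downslope_def by simp
    then show ?thesis using that i wi last_take_wx[of "i - 1" w] by auto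
  qed
  have R: "j < hd (drop k w)" if "drop k w \<noteq> []"
    using that cross(3) hd_drop_wx[of k w] by auto
  show ?thesis unfolding slide_def using w hop B L R by blast
qed

lemma hop_upslope_is_slide:
  assumes d: "distinct w" and f: "j \<in> free_letters w" and up: "\<not> downslope w (pos w j)"
  shows "slide j (hop w j) w"
proof -
  define i where "i = pos w j"
  define k where "k = (GREATEST k. k < i \<and> wx w (k - 1) > enat j \<and> enat j > wx w k)"
  have i: "1 \<le> i" "i \<le> length w" and wi: "wx w i = enat j" and upi: "upslope w i"
    using pos_free_letter[OF d f] up unfolding i_def by auto
  have avoid: "\<forall>m<i. wx w m \<noteq> enat j" using wx_eq_imp_eq[OF d i] wi by force
  have start: "wx w (i - 1) < enat j" using upi wi unfolding upslope_def by simp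
  have cross: "1 \<le> k" "k < i" "enat j < wx w (k - 1)" "wx w k < enat j"
    and below: "\<forall>m. k \<le> m \<longrightarrow> m < i \<longrightarrow> wx w m < enat j"
    using last_down_crossing[of "wx w" i "enat j", OF start i(1) _ avoid]
    unfolding k_def by (auto simp: wx_0)
  have hop: "hop w j = take (k - 1) w @ [j] @ take (i - k) (drop (k - 1) w) @ drop i w"
    using up unfolding hop_def i_def[symmetric] k_def by (simp add: Let_def)
  have "take (i - 1) w = take (k - 1) w @ take (i - k) (drop (k - 1) w)"
    using cross(1,2) take_add[of "k - 1" "i - k" w] by simp
  moreover have "w = take (i - 1) w @ [j] @ drop i w"
    using split_at_position[OF i] i wi by (simp add: wx_inside)
  ultimately have w: "w = take (k - 1) w @ take (i - k) (drop (k - 1) w) @ [j] @ drop i w"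
    by (metis append.assoc)
  have B: "\<forall>b \<in> set (take (i - k) (drop (k - 1) w)). b < j"
  proof
    fix b assume b: "b \<in> set (take (i - k) (drop (k - 1) w))"
    have "k - 1 + (i - k) \<le> length w" using i cross(1,2) by simp
    then obtain m where "k - 1 < m" "m \<le> k - 1 + (i - k)" "wx w m = enat b"
      using letter_of_segment b by blast
    moreover from this have "k \<le> m" "m < i" using cross(1,2) by linarith+
    ultimately show "b < j" using below by force
  qed
  have L: "j < last (take (k - 1) w)" if "take (k - 1) w \<noteq> []"
    using that cross(2,3) i last_take_wx[of "k - 1" w] by auto
  have R: "j < hd (drop i w)" if "drop i w \<noteq> []"
  proof -
    have "wx w i < wx w (i + 1)" using upi unfolding upslope_def by simp
    then show ?thesis using that wi hd_drop_wx[of i w] by auto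
  qed
  show ?thesis unfolding slide_def using w hop B L R by blast
qed

subsection \<open>Hop steps preserve 231-avoiding permutations\<close>

lemma hop_preserves_231:
  assumes d: "distinct w" and f: "j \<in> free_letters w"
  shows "mset (hop w j) = mset w \<and> (contains231 (hop w j) \<longleftrightarrow> contains231 w)"
proof (cases "downslope w (pos w j)")
  case True
  then have "slide j w (hop w j)" by (rule hop_downslope_is_slide[OF d f])
  then show ?thesis using slide_mset slide_preserves_231 d by blast
next
  case False
  then have s: "slide j (hop w j) w" by (rule hop_upslope_is_slide[OF d f])
  then have "mset (hop w j) = mset w" using slide_mset by simp
  moreover then have "distinct (hop w j)" using d mset_eq_imp_distinct_iff by blast
  ultimately show ?thesis using slide_preserves_231[OF s] by simp
qed

text \<open>The backward direction of a hop step starts from an arbitrary list, possibly with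
  repeated letters.  Whatever the list, hopping one of its letters either only rearranges it
  or produces a repeated letter; so a hop that yields a permutation came from a permutation.\<close>
lemma hop_rearranges_or_repeats:
  assumes "j \<in> set y"
  shows "mset (hop y j) = mset y \<or> \<not> distinct (hop y j)"
proof -
  define i where "i = pos y j"
  have i: "1 \<le> i" "i \<le> length y" "y ! (i - 1) = j"
    using pos_in_set[OF assms] unfolding i_def by auto
  have y: "mset y = mset (take (i - 1) y) + {#j#} + mset (drop i y)"
    using arg_cong[OF split_at_position[OF i(1,2)], of mset] i(3) by simp
  have j_in_drop: "j \<in> set (drop t y)" if "t \<le> i - 1" for t
  proof -
    have "drop t y ! (i - 1 - t) = j" "i - 1 - t < length (drop t y)" using that i by auto
    then show ?thesis by (metis nth_mem)
  qed
  have j_in_take: "j \<in> set (take t y)" if "i - 1 < t" for t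
  proof -
    have "take t y ! (i - 1) = j" "i - 1 < length (take t y)" using that i by auto
    then show ?thesis by (metis nth_mem)
  qed
  show ?thesis
  proof (cases "downslope y i")
    case True
    define k where "k = (LEAST k. i < k \<and> wx y k < enat j \<and> enat j < wx y (k + 1))"
    have hop: "hop y j = take (i - 1) y @ take (k - i) (drop i y) @ [j] @ drop k y"
      using True unfolding hop_def i_def[symmetric] k_def by (simp add: Let_def)
    show ?thesis
    proof (cases "i \<le> k")
      case True
      then have "mset (take (k - i) (drop i y)) + mset (drop k y) = mset (drop i y)"
        by (metis append_take_drop_id drop_drop le_add_diff_inverse2 mset_append)
      then show ?thesis using y unfolding hop by (simp add: ac_simps)
    next
      case False
      then show ?thesis using j_in_drop[of k] unfolding hop by simp
    qed
  next
    case False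
    define k where "k = (GREATEST k. k < i \<and> wx y (k - 1) > enat j \<and> enat j > wx y k)"
    have hop: "hop y j = take (k - 1) y @ [j] @ take (i - k) (drop (k - 1) y) @ drop i y"
      using False unfolding hop_def i_def[symmetric] k_def by (simp add: Let_def)
    consider "k = 0" | "i < k" | "1 \<le> k \<and> k \<le> i" by linarith
    then show ?thesis
    proof cases
      case 1
      then show ?thesis using assms unfolding hop by simp
    next
      case 2
      then have "j \<in> set (take (k - 1) y)" using i(1) by (intro j_in_take) linarith
      then show ?thesis unfolding hop by simp
    next
      case 3
      then have "take (i - 1) y = take (k - 1) y @ take (i - k) (drop (k - 1) y)"
        using take_add[of "k - 1" "i - k" y] by simp
      then show ?thesis using y unfolding hop by (simp add: ac_simps)
    qed
  qed
qed

lemma is_perm_mset_eq: "mset y = mset x \<Longrightarrow> is_perm n x \<Longrightarrow> is_perm n y"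
  unfolding is_perm_def by (metis mset_eq_imp_distinct_iff mset_eq_setD size_mset)

lemma hop_step_S231:
  assumes "hop_step u v"
  shows "u \<in> S231 n \<longleftrightarrow> v \<in> S231 n"
proof -
  obtain j where f: "j \<in> free_letters u" and v: "v = hop u j"
    using assms unfolding hop_step_def by blast
  have distinct_source: "distinct u" if "u \<in> S231 n \<or> v \<in> S231 n"
  proof -
    have "distinct u \<or> distinct v" using that by (auto simp: S231_def is_perm_def)
    then show ?thesis
      using hop_rearranges_or_repeats[OF free_letter_in_set[OF f]] v
        mset_eq_imp_distinct_iff by metis
  qed
  have "u \<in> S231 n \<longleftrightarrow> v \<in> S231 n" if "distinct u"
    using hop_preserves_231[OF that f] is_perm_mset_eq[of u v n] is_perm_mset_eq[of v u n] v
    by (auto simp: S231_def avoids231_def)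
  then show ?thesis using distinct_source by blast
qed

theorem mainTheorem15:
  fixes n :: nat and w :: "nat list"
  assumes "w \<in> S231 n"
  shows "hop_class w \<subseteq> S231 n"
proof
  fix v assume "v \<in> hop_class w"
  then have "(\<lambda>x y. hop_step x y \<or> hop_step y x)\<^sup>*\<^sup>* w v"
    by (simp add: hop_class_def hop_equiv_def)
  then show "v \<in> S231 n"
  proof (induction rule: rtranclp_induct)
    case base
    show ?case using assms .
  next
    case (step y z)
    then show ?case using hop_step_S231 by blast
  qed
qed

end
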